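(* Let $k,n,k',n'$ be positive integers. If a $(k,n)$ strategy and a $(k',n')$ strategy for the GKS game exist, then a $(kk',nn')$ strategy for the GKS game exists.
   Context: The GKS game with parameter $n$ (a positive integer). A strategy pair $(S,T)$ consists of a function $S$ assigning a bit in $\{0,1\}$ to every sequence $\pi_1\pi_2\ldots\pi_i$ of distinct elements of $[n]=\{1,\dots,n\}$ with $1\le i\le n-1$, and a function $T:\{0,1\}^n\to 2^{[n]}$. For a permutation $\pi=\pi_1\ldots\pi_n$ of $[n]$ and a bit $b$, the final array $A_{\rm final}\in\{0,1\}^n$ is defined by $A_{\rm final}[\pi_i]=S(\pi_1\ldots\pi_i)$ for $1\le i\le n-1$ and $A_{\rm final}[\pi_n]=b$. The pair $(S,T)$ is a $(k,n)$ strategy if for every permutation $\pi$ of $[n]$ and every bit $b$ we have $\pi_n\in T(A_{\rm final})$, and moreover $|T(\sigma)|\le k$ for every $\sigma\in\{0,1\}^n$. *)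

theory Defs
  imports "HOL-Library.FuncSet"
begin

text \<open>A sequence pi_1 ... pi_i of distinct elements of [n]
is a nat list.
An array in {0,1}^n is an extensional function on {1..n}.\<close>

definition is_perm :: "nat \<Rightarrow> nat list \<Rightarrow> bool" where
  "is_perm n \<pi> \<longleftrightarrow> distinct \<pi> \<and> set \<pi> = {1..n}"

text \<open>Final array: A[pi_i] = S(pi_1 ... pi_i) for i \<le> n-1 and A[pi_n] = b.\<close>
definition final_array :: "(nat list \<Rightarrow> bool) \<Rightarrow> nat list \<Rightarrow> bool \<Rightarrow> nat \<Rightarrow> bool" where
  "final_array S \<pi> b = (\<lambda>j. if j \<in> set \<pi> then
      (if j = last \<pi> then b else S (take (Suc (THE i. i < length \<pi> \<and> \<pi> ! i = j)) \<pi>))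
    else undefined)"

definition gks_strategy :: "nat \<Rightarrow> nat \<Rightarrow> (nat list \<Rightarrow> bool) \<Rightarrow> ((nat \<Rightarrow> bool) \<Rightarrow> nat set) \<Rightarrow> bool" where
  "gks_strategy k n S T \<longleftrightarrow>
     (\<forall>\<pi> b. is_perm n \<pi> \<longrightarrow> last \<pi> \<in> T (final_array S \<pi> b)) \<and>
     (\<forall>\<sigma> \<in> {1..n} \<rightarrow>\<^sub>E (UNIV :: bool set). T \<sigma> \<subseteq> {1..n} \<and> card (T \<sigma>) \<le> k)"

end

theory Submission
  imports Defs
begin

text \<open>Split the cells \<open>{1..n*n'}\<close> into \<open>n'\<close> blocks of \<open>n\<close> consecutive cells. Inside each block
the \<open>(k,n)\<close> strategy is played on the order in which the cells of the block are visited. The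
order in which the blocks are completed is a permutation of \<open>{1..n'}\<close>, on which the \<open>(k',n')\<close>
strategy is played: its bit for a block is realised as the parity of that block, which the last
visited cell of the block can always enforce. The final cell is the last cell of the last
completed block, so the outer guess contains its block and, inside each of the at most \<open>k'\<close>
guessed blocks, the inner guess has at most \<open>k\<close> cells.\<close>

lemma final_array_nth:
  assumes "distinct \<pi>" "Suc i < length \<pi>"
  shows "final_array S \<pi> b (\<pi>!i) = S (take (Suc i) \<pi>)"
proof -
  have "\<pi> \<noteq> []"
    using assms by auto
  then have "last \<pi> = \<pi> ! (length \<pi> - 1)"
    by (rule last_conv_nth)
  then have "\<pi>!i \<noteq> last \<pi>"
    using assms by (simp add: nth_eq_iff_index_eq)
  moreover have "(THE j. j < length \<pi> \<and> \<pi> ! j = \<pi>!i) = i"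
    using assms by (intro the_equality) (auto simp: nth_eq_iff_index_eq)
  ultimately show ?thesis
    using assms unfolding final_array_def by auto
qed

text \<open>Every array on \<open>{1..n}\<close> that agrees with \<open>S\<close> along \<open>\<pi>\<close> is a final array of \<open>\<pi>\<close>.\<close>

lemma gks_strategy_last_in_guess:
  assumes strategy: "gks_strategy k n S T" and perm: "is_perm n \<pi>"
    and \<sigma>: "\<sigma> \<in> {1..n} \<rightarrow>\<^sub>E (UNIV::bool set)"
    and agree: "\<And>i. Suc i < length \<pi> \<Longrightarrow> \<sigma> (\<pi>!i) = S (take (Suc i) \<pi>)"
  shows "last \<pi> \<in> T \<sigma>"
proof -
  have dist: "distinct \<pi>" and set_\<pi>: "set \<pi> = {1..n}"
    using perm by (auto simp: is_perm_def)
  have "\<sigma> j = final_array S \<pi> (\<sigma> (last \<pi>)) j" for j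
  proof (cases "j \<in> set \<pi> \<and> j \<noteq> last \<pi>")
    case True
    then obtain i where i: "i < length \<pi>" "\<pi>!i = j" "j \<noteq> last \<pi>"
      by (auto simp: in_set_conv_nth)
    moreover have "\<pi> \<noteq> []"
      using i by auto
    ultimately have "Suc i < length \<pi>"
      by (metis Suc_lessI diff_Suc_1 last_conv_nth)
    then show ?thesis
      using final_array_nth[OF dist] agree i by metis
  next
    case False
    then show ?thesis
      using \<sigma> set_\<pi> by (auto simp: final_array_def PiE_def extensional_def)
  qed
  then have "\<sigma> = final_array S \<pi> (\<sigma> (last \<pi>))" ..
  then show ?thesis
    using strategy perm unfolding gks_strategy_def by metis
qed

lemma gks_strategy_guess_bounds:
  assumes "gks_strategy k n S T"
  shows "T (restrict f {1..n}) \<subseteq> {1..n}" "card (T (restrict f {1..n})) \<le> k"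
proof -
  have "restrict f {1..n} \<in> {1..n} \<rightarrow>\<^sub>E (UNIV :: bool set)"
    by simp
  then show "T (restrict f {1..n}) \<subseteq> {1..n}" "card (T (restrict f {1..n})) \<le> k"
    using assms unfolding gks_strategy_def by blast+
qed

lemma nth_filter_witness:
  "j < length (filter P xs) \<Longrightarrow> \<exists>t < length xs. P (xs!t) \<and> filter P xs ! j = xs!t \<and>
     filter P (take (Suc t) xs) = take (Suc j) (filter P xs)"
proof (induction xs arbitrary: j)
  case Nil
  then show ?case by simp
next
  case (Cons x xs)
  show ?case
  proof (cases "P x \<and> j = 0")
    case True
    then show ?thesis by (intro exI[of _ 0]) auto
  next
    case False
    define j' where "j' = (if P x then j - 1 else j)"
    have "j' < length (filter P xs)"
      using Cons.prems False by (auto simp: j'_def)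
    then obtain t where "t < length xs" "P (xs!t)" "filter P xs ! j' = xs!t"
      "filter P (take (Suc t) xs) = take (Suc j') (filter P xs)"
      using Cons.IH by blast
    then show ?thesis
      using False by (intro exI[of _ "Suc t"]) (cases j, auto simp: j'_def)
  qed
qed

lemma last_filter_last: "xs \<noteq> [] \<Longrightarrow> P (last xs) \<Longrightarrow> last (filter P xs) = last xs"
  by (induction xs rule: rev_induct) auto

lemma last_take_Suc: "t < length xs \<Longrightarrow> last (take (Suc t) xs) = xs ! t"
  by (simp add: take_Suc_conv_app_nth)

definition parity :: "bool list \<Rightarrow> bool" where
  "parity bs = odd (length (filter id bs))"

lemma parity_snoc: "parity (bs @ [x]) = (parity bs \<noteq> x)"
  by (cases x) (auto simp: parity_def)

lemma parity_map_perm: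
  assumes "is_perm n q"
  shows "parity (map f q) = odd (card {a \<in> {1..n}. f a})"
proof -
  have "set (filter f q) = {a \<in> {1..n}. f a}" and "distinct (filter f q)"
    using assms by (auto simp: is_perm_def)
  then have "card {a \<in> {1..n}. f a} = length (filter f q)"
    by (metis distinct_card)
  then show ?thesis
    by (simp add: parity_def filter_map o_def)
qed

definition nonempty_prefixes :: "'a list \<Rightarrow> 'a list list" where
  "nonempty_prefixes p = map (\<lambda>j. take (Suc j) p) [0..<length p]"

lemma length_nonempty_prefixes [simp]: "length (nonempty_prefixes p) = length p"
  by (simp add: nonempty_prefixes_def)

lemma nth_nonempty_prefixes [simp]: "t < length p \<Longrightarrow> nonempty_prefixes p ! t = take (Suc t) p"
  by (simp add: nonempty_prefixes_def)

lemma in_set_nonempty_prefixes: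
  "r \<in> set (nonempty_prefixes p) \<longleftrightarrow> (\<exists>t < length p. r = take (Suc t) p)"
  by (auto simp: nonempty_prefixes_def)

lemma nonempty_prefixes_take:
  "m \<le> length p \<Longrightarrow> nonempty_prefixes (take m p) = take m (nonempty_prefixes p)"
  unfolding nonempty_prefixes_def by (auto simp: take_map min_def intro!: map_cong)

lemma distinct_nonempty_prefixes: "distinct (nonempty_prefixes p)"
  unfolding distinct_conv_nth by (metis length_nonempty_prefixes length_take min_absorb2
      Suc_leI nat.inject nth_nonempty_prefixes)

locale gks_product =
  fixes n n' k k' :: nat and S1 S2 :: "nat list \<Rightarrow> bool"
    and T1 T2 :: "(nat \<Rightarrow> bool) \<Rightarrow> nat set"
  assumes n_pos: "0 < n" and n'_pos: "0 < n'"
    and inner_strategy: "gks_strategy k n S1 T1"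
    and outer_strategy: "gks_strategy k' n' S2 T2"
begin

text \<open>Cell \<open>cell c a\<close> is the \<open>a\<close>-th cell of block \<open>c\<close>, both counted from 1.\<close>

definition block :: "nat \<Rightarrow> nat" where "block x = (x - 1) div n + 1"
definition offset :: "nat \<Rightarrow> nat" where "offset x = (x - 1) mod n + 1"
definition cell :: "nat \<Rightarrow> nat \<Rightarrow> nat" where "cell c a = (c - 1) * n + a"

lemma block_range: "x \<in> {1..n*n'} \<Longrightarrow> block x \<in> {1..n'}"
  by (auto simp: block_def less_mult_imp_div_less mult.commute Suc_le_eq)

lemma offset_range: "offset x \<in> {1..n}"
  using n_pos by (simp add: offset_def Suc_leI)

lemma cell_block_offset: "1 \<le> x \<Longrightarrow> cell (block x) (offset x) = x"
  unfolding cell_def block_def offset_def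
  by (metis add.assoc add_diff_cancel_right' div_mult_mod_eq le_add_diff_inverse2)

lemma
  assumes "c \<in> {1..n'}" "a \<in> {1..n}"
  shows block_cell: "block (cell c a) = c"
    and offset_cell: "offset (cell c a) = a"
    and cell_range: "cell c a \<in> {1..n*n'}"
proof -
  have "cell c a - 1 = (a - 1) + (c - 1) * n" and "a - 1 < n"
    using assms by (auto simp: cell_def)
  then have "(cell c a - 1) div n = c - 1" "(cell c a - 1) mod n = a - 1"
    using n_pos by simp_all
  then show "block (cell c a) = c" "offset (cell c a) = a"
    using assms unfolding block_def offset_def by auto
  have "(c - 1) * n + a \<le> c * n"
    using assms by (cases c) auto
  also have "\<dots> \<le> n' * n"
    using assms by simp
  finally show "cell c a \<in> {1..n*n'}"
    using assms by (auto simp: cell_def mult.commute)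
qed

definition block_word :: "nat \<Rightarrow> nat list \<Rightarrow> nat list" where
  "block_word c p = map offset (filter (\<lambda>y. block y = c) p)"

definition completes_block :: "nat list \<Rightarrow> bool" where
  "completes_block r \<longleftrightarrow> length (filter (\<lambda>y. block y = block (last r)) r) = n"

definition block_order :: "nat list \<Rightarrow> nat list" where
  "block_order p = map (\<lambda>r. block (last r)) (filter completes_block (nonempty_prefixes p))"

text \<open>The cell completing a block is given the value that makes the parity of the block equal
  to the outer strategy's bit for the block order so far.\<close>

definition prod_S :: "nat list \<Rightarrow> bool" where
  "prod_S p = (let q = block_word (block (last p)) p in
     if length q < n then S1 q
     else S2 (block_order p) \<noteq> parity (map (\<lambda>j. S1 (take j q)) [1..<n]))"

definition block_parity :: "(nat \<Rightarrow> bool) \<Rightarrow> nat \<Rightarrow> bool" where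
  "block_parity \<sigma> = restrict (\<lambda>c. odd (card {a \<in> {1..n}. \<sigma> (cell c a)})) {1..n'}"

definition block_array :: "(nat \<Rightarrow> bool) \<Rightarrow> nat \<Rightarrow> nat \<Rightarrow> bool" where
  "block_array \<sigma> c = restrict (\<lambda>a. \<sigma> (cell c a)) {1..n}"

definition prod_T :: "(nat \<Rightarrow> bool) \<Rightarrow> nat set" where
  "prod_T \<sigma> = (\<Union>c \<in> T2 (block_parity \<sigma>). cell c ` T1 (block_array \<sigma> c))"

lemma last_block_word:
  "r \<noteq> [] \<Longrightarrow> last (block_word (block (last r)) r) = offset (last r)"
proof -
  assume r: "r \<noteq> []"
  then have "filter (\<lambda>y. block y = block (last r)) r \<noteq> []"
    using last_in_set by (auto simp: filter_empty_conv)
  then show ?thesis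
    unfolding block_word_def using last_filter_last[OF r] by (simp add: last_map)
qed

lemma prod_T_subset: "prod_T \<sigma> \<subseteq> {1..n*n'}"
proof
  fix x assume "x \<in> prod_T \<sigma>"
  then obtain c a where "c \<in> T2 (block_parity \<sigma>)" "a \<in> T1 (block_array \<sigma> c)" "x = cell c a"
    unfolding prod_T_def by blast
  moreover have "T2 (block_parity \<sigma>) \<subseteq> {1..n'}" "T1 (block_array \<sigma> c) \<subseteq> {1..n}"
    unfolding block_parity_def block_array_def
    using gks_strategy_guess_bounds inner_strategy outer_strategy by blast+
  ultimately show "x \<in> {1..n*n'}"
    using cell_range by blast
qed

lemma card_prod_T: "card (prod_T \<sigma>) \<le> k * k'"
proof -
  have outer: "T2 (block_parity \<sigma>) \<subseteq> {1..n'}" "card (T2 (block_parity \<sigma>)) \<le> k'"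
    unfolding block_parity_def using gks_strategy_guess_bounds outer_strategy by blast+
  have inner: "T1 (block_array \<sigma> c) \<subseteq> {1..n}" "card (T1 (block_array \<sigma> c)) \<le> k" for c
    unfolding block_array_def using gks_strategy_guess_bounds inner_strategy by blast+
  have "card (prod_T \<sigma>) \<le> (\<Sum>c\<in>T2 (block_parity \<sigma>). card (cell c ` T1 (block_array \<sigma> c)))"
    unfolding prod_T_def using outer(1) by (intro card_UN_le) (simp add: finite_subset)
  also have "\<dots> \<le> (\<Sum>c\<in>T2 (block_parity \<sigma>). k)"
    using inner by (intro sum_mono) (meson card_image_le finite_atLeastAtMost finite_subset le_trans)
  also have "\<dots> \<le> k' * k"
    using outer(2) by simp
  finally show ?thesis
    by (simp add: mult.commute)
qed

context
  fixes \<pi> :: "nat list"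
  assumes perm: "is_perm (n*n') \<pi>"
begin

lemma distinct_\<pi>: "distinct \<pi>" and set_\<pi>: "set \<pi> = {1..n*n'}"
  using perm by (auto simp: is_perm_def)

lemma \<pi>_not_Nil: "\<pi> \<noteq> []"
proof -
  have "1 \<le> n * n'"
    using n_pos n'_pos by (simp add: Suc_le_eq)
  then show ?thesis
    using set_\<pi> by force
qed

lemma block_nth_range: "t < length \<pi> \<Longrightarrow> block (\<pi>!t) \<in> {1..n'}"
  using block_range nth_mem set_\<pi> by blast

lemma cell_block_offset_nth: "t < length \<pi> \<Longrightarrow> cell (block (\<pi>!t)) (offset (\<pi>!t)) = \<pi>!t"
  using nth_mem set_\<pi> by (intro cell_block_offset) fastforce

lemma block_word_perm:
  assumes c: "c \<in> {1..n'}"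
  shows "is_perm n (block_word c \<pi>)"
proof -
  have "inj_on offset (set (filter (\<lambda>y. block y = c) \<pi>))"
  proof (rule inj_onI)
    fix x y assume "x \<in> set (filter (\<lambda>y. block y = c) \<pi>)" "y \<in> set (filter (\<lambda>y. block y = c) \<pi>)"
      and "offset x = offset y"
    then have "1 \<le> x" "1 \<le> y" "block x = block y"
      using set_\<pi> by auto
    then show "x = y"
      using cell_block_offset \<open>offset x = offset y\<close> by metis
  qed
  then have "distinct (block_word c \<pi>)"
    using distinct_\<pi> by (simp add: block_word_def distinct_map)
  moreover have "set (block_word c \<pi>) = {1..n}"
  proof
    show "set (block_word c \<pi>) \<subseteq> {1..n}"
      using offset_range by (auto simp: block_word_def)
    show "{1..n} \<subseteq> set (block_word c \<pi>)"
    proof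
      fix a assume a: "a \<in> {1..n}"
      then have "cell c a \<in> set (filter (\<lambda>y. block y = c) \<pi>)"
        using block_cell[OF c a] cell_range[OF c a] set_\<pi> by simp
      then show "a \<in> set (block_word c \<pi>)"
        unfolding block_word_def using offset_cell[OF c a] by (metis image_eqI list.set_map)
    qed
  qed
  ultimately show ?thesis
    by (simp add: is_perm_def)
qed

lemma length_filter_block:
  assumes "c \<in> {1..n'}"
  shows "length (filter (\<lambda>y. block y = c) \<pi>) = n"
proof -
  have "length (block_word c \<pi>) = n"
    using block_word_perm[OF assms] distinct_card[of "block_word c \<pi>"]
    unfolding is_perm_def by simp
  then show ?thesis
    by (simp add: block_word_def)
qed

lemma completes_block_\<pi>: "completes_block \<pi>"
  unfolding completes_block_def
  using length_filter_block block_nth_range[of "length \<pi> - 1"] \<pi>_not_Nil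
  by (simp add: last_conv_nth)

lemma completes_block_filter_drop:
  assumes t: "t < length \<pi>" and completes: "completes_block (take (Suc t) \<pi>)"
  shows "filter (\<lambda>y. block y = block (\<pi>!t)) (drop (Suc t) \<pi>) = []"
proof -
  let ?P = "\<lambda>y. block y = block (\<pi>!t)"
  have "filter ?P \<pi> = filter ?P (take (Suc t) \<pi>) @ filter ?P (drop (Suc t) \<pi>)"
    by (metis append_take_drop_id filter_append)
  moreover have "length (filter ?P (take (Suc t) \<pi>)) = n"
    using completes t by (simp add: completes_block_def take_Suc_conv_app_nth)
  ultimately show ?thesis
    using length_filter_block[OF block_nth_range[OF t]] by simp
qed

lemma final_array_prod_S_inner:
  assumes c: "c \<in> {1..n'}" and j: "Suc j < n"
  shows "final_array prod_S \<pi> b (cell c (block_word c \<pi> ! j)) = S1 (take (Suc j) (block_word c \<pi>))"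
proof -
  let ?P = "\<lambda>y. block y = c"
  have "j < length (filter ?P \<pi>)"
    using length_filter_block[OF c] j by simp
  then obtain t where t: "t < length \<pi>" "?P (\<pi>!t)" "filter ?P \<pi> ! j = \<pi>!t"
    and prefix: "filter ?P (take (Suc t) \<pi>) = take (Suc j) (filter ?P \<pi>)"
    using nth_filter_witness by blast
  have word_j: "block_word c \<pi> ! j = offset (\<pi>!t)"
    using \<open>j < length (filter ?P \<pi>)\<close> t by (simp add: block_word_def)
  have "Suc t < length \<pi>"
  proof (rule ccontr)
    assume "\<not> Suc t < length \<pi>"
    then have "filter ?P \<pi> = take (Suc j) (filter ?P \<pi>)"
      using prefix by simp
    then show False
      using length_filter_block[OF c] j by (metis length_take min_absorb2 less_or_eq_imp_le nat_neq_iff)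
  qed
  then have "final_array prod_S \<pi> b (\<pi>!t) = prod_S (take (Suc t) \<pi>)"
    using final_array_nth[OF distinct_\<pi>] by blast
  also have "\<dots> = S1 (take (Suc j) (block_word c \<pi>))"
    using t prefix j length_filter_block[OF c]
    by (simp add: prod_S_def block_word_def take_map take_Suc_conv_app_nth)
  finally show ?thesis
    using word_j cell_block_offset_nth[OF t(1)] t(2) by simp
qed

lemma distinct_block_order: "distinct (block_order \<pi>)"
proof -
  have unique: "block (\<pi>!t2) \<noteq> block (\<pi>!t1)"
    if "t1 < t2" "t2 < length \<pi>" "completes_block (take (Suc t1) \<pi>)" for t1 t2
  proof -
    have "\<pi>!t2 \<in> set (drop (Suc t1) \<pi>)"
      using that nth_mem[of "t2 - Suc t1" "drop (Suc t1) \<pi>"] by simp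
    moreover have "t1 < length \<pi>"
      using that by simp
    ultimately show ?thesis
      using completes_block_filter_drop[OF _ that(3)] unfolding filter_empty_conv by blast
  qed
  have "inj_on (\<lambda>r. block (last r)) (set (filter completes_block (nonempty_prefixes \<pi>)))"
  proof (rule inj_onI)
    fix r1 r2
    assume "r1 \<in> set (filter completes_block (nonempty_prefixes \<pi>))"
      "r2 \<in> set (filter completes_block (nonempty_prefixes \<pi>))"
      and same_block: "block (last r1) = block (last r2)"
    then obtain t1 t2 where t: "t1 < length \<pi>" "t2 < length \<pi>"
      "r1 = take (Suc t1) \<pi>" "r2 = take (Suc t2) \<pi>" "completes_block r1" "completes_block r2"
      by (auto simp: in_set_nonempty_prefixes)
    then have "block (\<pi>!t1) = block (\<pi>!t2)"
      using same_block by (simp add: last_take_Suc)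
    then have "t1 = t2"
      using unique[of t1 t2] unique[of t2 t1] t by (metis linorder_neqE_nat)
    then show "r1 = r2"
      using t by simp
  qed
  then show ?thesis
    using distinct_filter[OF distinct_nonempty_prefixes] by (simp add: block_order_def distinct_map)
qed

lemma set_block_order: "set (block_order \<pi>) = {1..n'}"
proof
  show "set (block_order \<pi>) \<subseteq> {1..n'}"
    using block_nth_range
    by (auto simp: block_order_def in_set_nonempty_prefixes last_take_Suc)
  show "{1..n'} \<subseteq> set (block_order \<pi>)"
  proof
    fix c assume c: "c \<in> {1..n'}"
    let ?P = "\<lambda>y. block y = c"
    have "n - 1 < length (filter ?P \<pi>)"
      using length_filter_block[OF c] n_pos by simp
    then obtain t where t: "t < length \<pi>" "?P (\<pi>!t)"
      and "filter ?P (take (Suc t) \<pi>) = take (Suc (n - 1)) (filter ?P \<pi>)"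
      using nth_filter_witness by blast
    then have "completes_block (take (Suc t) \<pi>)"
      using length_filter_block[OF c] n_pos by (simp add: completes_block_def last_take_Suc)
    moreover have "take (Suc t) \<pi> \<in> set (nonempty_prefixes \<pi>)"
      using t by (auto simp: in_set_nonempty_prefixes)
    ultimately have "block (last (take (Suc t) \<pi>)) \<in> set (block_order \<pi>)"
      unfolding block_order_def by simp
    then show "c \<in> set (block_order \<pi>)"
      using t by (simp add: last_take_Suc)
  qed
qed

lemma block_order_perm: "is_perm n' (block_order \<pi>)"
  using distinct_block_order set_block_order by (simp add: is_perm_def)

lemma length_block_order: "length (block_order \<pi>) = n'"
  using distinct_card[OF distinct_block_order] set_block_order by simp

lemma last_block_order: "last (block_order \<pi>) = block (last \<pi>)"
proof -
  have "last (nonempty_prefixes \<pi>) = \<pi>" "nonempty_prefixes \<pi> \<noteq> []"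
    using \<pi>_not_Nil by (simp_all add: last_conv_nth nonempty_prefixes_def)
  then show ?thesis
    unfolding block_order_def
    using completes_block_\<pi> last_filter_last[of "nonempty_prefixes \<pi>" completes_block]
    by (metis filter_empty_conv last_in_set last_map)
qed

lemma block_order_nth:
  assumes i: "i < n'"
  obtains t where "t < length \<pi>" "completes_block (take (Suc t) \<pi>)"
    "block_order \<pi> ! i = block (\<pi>!t)"
    "block_order (take (Suc t) \<pi>) = take (Suc i) (block_order \<pi>)"
proof -
  define F where "F = filter completes_block (nonempty_prefixes \<pi>)"
  have "i < length F"
    using length_block_order i by (simp add: block_order_def F_def)
  then obtain t where t: "t < length \<pi>" "completes_block (take (Suc t) \<pi>)"
    "F ! i = take (Suc t) \<pi>"
    and prefix: "filter completes_block (take (Suc t) (nonempty_prefixes \<pi>)) = take (Suc i) F"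
    using nth_filter_witness[of i completes_block "nonempty_prefixes \<pi>"] by (auto simp: F_def)
  show thesis
  proof
    show "block_order \<pi> ! i = block (\<pi>!t)"
      using t \<open>i < length F\<close> by (simp add: block_order_def F_def[symmetric] take_Suc_conv_app_nth)
    show "block_order (take (Suc t) \<pi>) = take (Suc i) (block_order \<pi>)"
      using t prefix by (simp add: block_order_def nonempty_prefixes_take F_def take_map)
  qed (use t in auto)
qed

lemma block_word_take_completes:
  assumes t: "t < length \<pi>" and completes: "completes_block (take (Suc t) \<pi>)"
  shows "block_word (block (\<pi>!t)) (take (Suc t) \<pi>) = block_word (block (\<pi>!t)) \<pi>"
proof -
  let ?P = "\<lambda>y. block y = block (\<pi>!t)"
  have "filter ?P \<pi> = filter ?P (take (Suc t) \<pi>) @ filter ?P (drop (Suc t) \<pi>)"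
    by (metis append_take_drop_id filter_append)
  then show ?thesis
    using completes_block_filter_drop[OF t completes] by (simp add: block_word_def)
qed

lemma final_array_prod_S_completing:
  assumes t: "Suc t < length \<pi>" and completes: "completes_block (take (Suc t) \<pi>)"
  defines "q \<equiv> block_word (block (\<pi>!t)) \<pi>"
  shows "final_array prod_S \<pi> b (\<pi>!t)
    = (S2 (block_order (take (Suc t) \<pi>)) \<noteq> parity (map (\<lambda>j. S1 (take j q)) [1..<n]))"
proof -
  have "length q = n"
    using length_filter_block[OF block_nth_range] t by (simp add: q_def block_word_def)
  then show ?thesis
    using final_array_nth[OF distinct_\<pi> t] block_word_take_completes[OF Suc_lessD[OF t] completes]
    by (simp add: prod_S_def Let_def last_take_Suc[OF Suc_lessD[OF t]] q_def)
qed

lemma block_parity_completed: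
  assumes t: "Suc t < length \<pi>" and completes: "completes_block (take (Suc t) \<pi>)"
  shows "block_parity (final_array prod_S \<pi> b) (block (\<pi>!t)) = S2 (block_order (take (Suc t) \<pi>))"
proof -
  let ?A = "final_array prod_S \<pi> b"
  define c where "c = block (\<pi>!t)"
  define q where "q = block_word c \<pi>"
  have c: "c \<in> {1..n'}"
    using block_nth_range t by (simp add: c_def)
  have q_perm: "is_perm n q" and length_q: "length q = n"
    using block_word_perm[OF c] length_filter_block[OF c] by (simp_all add: q_def block_word_def)
  then have q_snoc: "q = butlast q @ [last q]"
    using n_pos by (metis append_butlast_last_id length_0_conv not_less0)
  have "last q = offset (\<pi>!t)"
    using last_block_word[of "take (Suc t) \<pi>"] block_word_take_completes[OF _ completes] t \<pi>_not_Nil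
    by (simp add: last_take_Suc c_def q_def)
  then have last_cell: "cell c (last q) = \<pi>!t"
    using cell_block_offset_nth t by (simp add: c_def)
  have earlier: "map (\<lambda>a. ?A (cell c a)) (butlast q) = map (\<lambda>j. S1 (take j q)) [1..<n]"
  proof (rule nth_equalityI)
    fix j assume "j < length (map (\<lambda>a. ?A (cell c a)) (butlast q))"
    then have j: "Suc j < n"
      using length_q by simp
    then have "butlast q ! j = q ! j" "[1..<n] ! j = Suc j"
      using length_q by (simp_all add: nth_butlast)
    then show "map (\<lambda>a. ?A (cell c a)) (butlast q) ! j = map (\<lambda>j. S1 (take j q)) [1..<n] ! j"
      using final_array_prod_S_inner[OF c j] j length_q by (simp add: q_def)
  qed (use length_q in simp)
  have completing: "?A (\<pi>!t)
      = (S2 (block_order (take (Suc t) \<pi>)) \<noteq> parity (map (\<lambda>j. S1 (take j q)) [1..<n]))"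
    using final_array_prod_S_completing[OF t completes] by (simp add: c_def q_def)
  have "block_parity ?A c = parity (map (\<lambda>a. ?A (cell c a)) q)"
    using parity_map_perm[OF q_perm] c by (simp add: block_parity_def)
  also have "\<dots> = S2 (block_order (take (Suc t) \<pi>))"
    by (subst q_snoc) (auto simp: parity_snoc earlier last_cell completing)
  finally show ?thesis
    by (simp add: c_def)
qed

lemma block_parity_final_array:
  assumes i: "Suc i < n'"
  shows "block_parity (final_array prod_S \<pi> b) (block_order \<pi> ! i)
    = S2 (take (Suc i) (block_order \<pi>))"
proof -
  obtain t where t: "t < length \<pi>" "completes_block (take (Suc t) \<pi>)"
    and order_i: "block_order \<pi> ! i = block (\<pi>!t)"
    and order_prefix: "block_order (take (Suc t) \<pi>) = take (Suc i) (block_order \<pi>)"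
    by (rule block_order_nth[OF Suc_lessD[OF i]])
  have "Suc t < length \<pi>"
  proof (rule ccontr)
    assume "\<not> Suc t < length \<pi>"
    then have "length (block_order \<pi>) = length (take (Suc i) (block_order \<pi>))"
      using order_prefix by simp
    then show False
      using length_block_order i by simp
  qed
  then show ?thesis
    using block_parity_completed t(2) order_i order_prefix by simp
qed

lemma last_in_prod_T: "last \<pi> \<in> prod_T (final_array prod_S \<pi> b)"
proof -
  let ?A = "final_array prod_S \<pi> b"
  define c where "c = block (last \<pi>)"
  define q where "q = block_word c \<pi>"
  have last_range: "last \<pi> \<in> {1..n*n'}"
    using last_in_set[OF \<pi>_not_Nil] set_\<pi> by simp
  then have c: "c \<in> {1..n'}"
    using block_range[OF last_range] by (simp add: c_def)
  have "last (block_order \<pi>) \<in> T2 (block_parity ?A)"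
  proof (rule gks_strategy_last_in_guess[OF outer_strategy block_order_perm])
    show "block_parity ?A \<in> {1..n'} \<rightarrow>\<^sub>E UNIV"
      by (simp add: block_parity_def)
    show "block_parity ?A (block_order \<pi> ! i) = S2 (take (Suc i) (block_order \<pi>))"
      if "Suc i < length (block_order \<pi>)" for i
      using block_parity_final_array that length_block_order by simp
  qed
  then have outer: "c \<in> T2 (block_parity ?A)"
    using last_block_order c_def by simp
  have q_perm: "is_perm n q" and length_q: "length q = n"
    using block_word_perm[OF c] length_filter_block[OF c] by (simp_all add: q_def block_word_def)
  have "block_array ?A c \<in> {1..n} \<rightarrow>\<^sub>E UNIV"
    by (simp add: block_array_def)
  moreover have "block_array ?A c (q ! j) = S1 (take (Suc j) q)" if j: "Suc j < length q" for j
  proof -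
    have "q ! j \<in> {1..n}"
      using q_perm j nth_mem[of j q] by (simp add: is_perm_def)
    then show ?thesis
      using final_array_prod_S_inner[OF c] j length_q by (simp add: block_array_def q_def)
  qed
  ultimately have "last q \<in> T1 (block_array ?A c)"
    by (rule gks_strategy_last_in_guess[OF inner_strategy q_perm])
  then have "offset (last \<pi>) \<in> T1 (block_array ?A c)"
    using last_block_word[OF \<pi>_not_Nil] by (simp add: q_def c_def)
  then have "cell c (offset (last \<pi>)) \<in> prod_T ?A"
    using outer unfolding prod_T_def by blast
  moreover have "cell c (offset (last \<pi>)) = last \<pi>"
    using cell_block_offset last_range by (simp add: c_def)
  ultimately show ?thesis
    by simp
qed

end

lemma gks_strategy_prod: "gks_strategy (k * k') (n * n') prod_S prod_T"
  unfolding gks_strategy_def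
  using last_in_prod_T prod_T_subset card_prod_T by simp

end

theorem lemma1:
  fixes k n k' n' :: nat
  assumes "0 < k" "0 < n" "0 < k'" "0 < n'"
    and "\<exists>S T. gks_strategy k n S T"
    and "\<exists>S T. gks_strategy k' n' S T"
  shows "\<exists>S T. gks_strategy (k * k') (n * n') S T"
proof -
  obtain S1 T1 S2 T2 where "gks_strategy k n S1 T1" "gks_strategy k' n' S2 T2"
    using assms(5,6) by blast
  then interpret gks_product n n' k k' S1 S2 T1 T2
    using assms(2,4) by unfold_locales
  show ?thesis
    using gks_strategy_prod by blast
qed

end
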